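(* Assume the no-anticipation, common-support and transition-independence conditions stated in the context. Then for every $t=T_0+1,\dots,T$, \[ \boldsymbol\mu^{\mathrm{DiD}}_t-\boldsymbol\mu^{\mathrm{ATT}}_t=\sum_{\mathbf x_1^{T_0}\in\mathcal X^{T_0}}\mathbb{E}\big[\mathbf X_t-\mathbf x_{T_0}\mid \mathbf X_1^{T_0}=\mathbf x_1^{T_0},D=0\big]\Big\{\Pr(\mathbf X_1^{T_0}=\mathbf x_1^{T_0}\mid D=1)-\Pr(\mathbf X_1^{T_0}=\mathbf x_1^{T_0}\mid D=0)\Big\}, \] where $\mathbf x_{T_0}$ denotes the last component of $\mathbf x_1^{T_0}=(\mathbf x_1,\dots,\mathbf x_{T_0})$.
   Context: Fix integers $T_0\ge1$, $T_1\ge1$, $T=T_0+T_1$, $K\ge2$, and outcome categories $\mathcal Y=\{\bar y^{(1)},\dots,\bar y^{(K)}\}$. On a probability space, a unit has a treatment indicator $D\in\{0,1\}$ (treated units are untreated in periods $1,\dots,T_0$ and treated in periods $T_0+1,\dots,T$; control units are never treated) and potential outcomes $Y_t(0),Y_t(1)\in\mathcal Y$, $t=1,\dots,T$. For $d\in\{0,1\}$ let $\mathbf X_t(d)=(\mathbf 1(Y_t(d)=\bar y^{(1)}),\dots,\mathbf 1(Y_t(d)=\bar y^{(K)}))^\top\in\mathcal X:=\{x\in\{0,1\}^K:\sum_k x^{(k)}=1\}$. Observed outcomes: $\mathbf X_t=\mathbf X_t(0)$ for $t\le T_0$, $\mathbf X_t=D\mathbf X_t(1)+(1-D)\mathbf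 X_t(0)$ for $t\ge T_0+1$. Write $\mathbf X_1^{T_0}=(\mathbf X_1,\dots,\mathbf X_{T_0})$, $\mathbf X_1^{T_0}(0)=(\mathbf X_1(0),\dots,\mathbf X_{T_0}(0))$. For $t\ge T_0+1$: $\boldsymbol\mu^{\mathrm{ATT}}_t=\mathbb{E}[\mathbf X_t(1)-\mathbf X_t(0)\mid D=1]$ and $\boldsymbol\mu^{\mathrm{DiD}}_t=\mathbb{E}[\mathbf X_t-\mathbf X_{T_0}\mid D=1]-\mathbb{E}[\mathbf X_t-\mathbf X_{T_0}\mid D=0]$. Conditional quantities are taken only given events of positive probability. No anticipation: $\mathbf X_t(1)=\mathbf X_t(0)$ for $t\le T_0$. Common support: there is $\epsilon>0$ with $\epsilon\le\Pr(D=1\mid\mathbf X_1^{T_0}=\mathbf x_1^{T_0})<1-\epsilon$ for every $\mathbf x_1^{T_0}$ with $\Pr(\mathbf X_1^{T_0}=\mathbf x_1^{T_0})>0$. Transition independence: for every $t\ge T_0+1$, $\mathbf x_t\in\mathcal X$, $\mathbf x_1^{T_0}\in\mathcal X^{T_0}$: $\Pr(\mathbf X_t(0)=\mathbf x_t\mid \mathbf X_1^{T_0}(0)=\mathbf x_1^{T_0},D=1)=\Pr(\mathbf X_t(0)=\mathbf x_t\mid \mathbf X_1^{T_0}(0)=\mathbf x_1^{T_0},D=0)$. *)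

theory Defs
  imports "HOL-Probability.Probability"
begin

text \<open>Outcome categories are the elements of a finite type 'k (K = CARD('k)).
  The one-hot encoding of a category is a vector in real^'k.\<close>

definition ind_vec :: "'k::finite \<Rightarrow> real^'k" where
  "ind_vec y = (\<chi> k. if y = k then 1 else 0)"

definition Yobs :: "nat \<Rightarrow> ('a \<Rightarrow> bool) \<Rightarrow> (nat \<Rightarrow> 'a \<Rightarrow> 'k) \<Rightarrow> (nat \<Rightarrow> 'a \<Rightarrow> 'k)
    \<Rightarrow> nat \<Rightarrow> 'a \<Rightarrow> 'k" where
  "Yobs T0 D Y0 Y1 t \<omega> = (if t \<le> T0 then Y0 t \<omega> else if D \<omega> then Y1 t \<omega> else Y0 t \<omega>)"

definition Xobs :: "nat \<Rightarrow> ('a \<Rightarrow> bool) \<Rightarrow> (nat \<Rightarrow> 'a \<Rightarrow> 'k::finite) \<Rightarrow> (nat \<Rightarrow> 'a \<Rightarrow> 'k)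
    \<Rightarrow> nat \<Rightarrow> 'a \<Rightarrow> real^'k" where
  "Xobs T0 D Y0 Y1 t \<omega> = ind_vec (Yobs T0 D Y0 Y1 t \<omega>)"

text \<open>Pre-treatment histories x_1^{T0} in X^{T0}, represented by their categories.\<close>
definition histories :: "nat \<Rightarrow> (nat \<Rightarrow> 'k) set" where
  "histories T0 = PiE {1..T0} (\<lambda>_. UNIV)"

definition hist_event :: "'a measure \<Rightarrow> (nat \<Rightarrow> 'a \<Rightarrow> 'k) \<Rightarrow> nat \<Rightarrow> (nat \<Rightarrow> 'k) \<Rightarrow> 'a set" where
  "hist_event M Y T0 h = {\<omega> \<in> space M. \<forall>s\<in>{1..T0}. Y s \<omega> = h s}"

definition cprob :: "'a measure \<Rightarrow> 'a set \<Rightarrow> 'a set \<Rightarrow> real" where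
  "cprob M A B = measure M (A \<inter> B) / measure M B"

definition cexp :: "'a measure \<Rightarrow> ('a \<Rightarrow> real^'k) \<Rightarrow> 'a set \<Rightarrow> real^'k" where
  "cexp M X B = (1 / measure M B) *\<^sub>R (\<integral>\<omega>. indicator B \<omega> *\<^sub>R X \<omega> \<partial>M)"

definition treated :: "'a measure \<Rightarrow> ('a \<Rightarrow> bool) \<Rightarrow> 'a set" where
  "treated M D = {\<omega> \<in> space M. D \<omega>}"

definition control :: "'a measure \<Rightarrow> ('a \<Rightarrow> bool) \<Rightarrow> 'a set" where
  "control M D = {\<omega> \<in> space M. \<not> D \<omega>}"

definition mu_ATT :: "'a measure \<Rightarrow> ('a \<Rightarrow> bool) \<Rightarrow> (nat \<Rightarrow> 'a \<Rightarrow> 'k::finite) \<Rightarrow> (nat \<Rightarrow> 'a \<Rightarrow> 'k)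
    \<Rightarrow> nat \<Rightarrow> real^'k" where
  "mu_ATT M D Y0 Y1 t = cexp M (\<lambda>\<omega>. ind_vec (Y1 t \<omega>) - ind_vec (Y0 t \<omega>)) (treated M D)"

definition mu_DiD :: "'a measure \<Rightarrow> nat \<Rightarrow> ('a \<Rightarrow> bool) \<Rightarrow> (nat \<Rightarrow> 'a \<Rightarrow> 'k::finite)
    \<Rightarrow> (nat \<Rightarrow> 'a \<Rightarrow> 'k) \<Rightarrow> nat \<Rightarrow> real^'k" where
  "mu_DiD M T0 D Y0 Y1 t =
     cexp M (\<lambda>\<omega>. Xobs T0 D Y0 Y1 t \<omega> - Xobs T0 D Y0 Y1 T0 \<omega>) (treated M D)
   - cexp M (\<lambda>\<omega>. Xobs T0 D Y0 Y1 t \<omega> - Xobs T0 D Y0 Y1 T0 \<omega>) (control M D)"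

end

theory Submission
  imports Defs
begin

(* Write Z = X_t(0) - X_T0(0). On the treated the observed change X_t - X_T0 equals
   X_t(1) - X_t(0) + Z, on the controls it equals Z, so DiD - ATT = E[Z | D=1] - E[Z | D=0].
   Expand both conditional expectations over the pre-treatment histories h. On the event of h,
   X_T0(0) is the constant x_T0, and by transition independence X_t(0) has the same conditional
   law in both groups, so E[Z | h, D=1] = E[Z | h, D=0]; common support makes the control cell
   non-null whenever the treated one is. Hence only the weights Pr(h | D) differ between the two
   expansions, which is the stated formula. *)

lemma ind_vec_eq_axis: "ind_vec y = axis y (1::real)"
  by (simp add: ind_vec_def axis_def vec_eq_iff eq_commute)

lemma integrable_ind_vec:
  assumes "finite_measure M" "Y \<in> M \<rightarrow>\<^sub>M count_space UNIV"
  shows "integrable M (\<lambda>\<omega>. ind_vec (Y \<omega>))"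
proof (rule finite_measure.integrable_const_bound[OF assms(1), where B=1])
  show "AE \<omega> in M. norm (ind_vec (Y \<omega>)) \<le> 1"
    by (simp add: ind_vec_eq_axis)
  show "(\<lambda>\<omega>. ind_vec (Y \<omega>)) \<in> borel_measurable M"
    using assms(2) by (rule measurable_compose) simp
qed

lemma cexp_cong: "(\<And>\<omega>. \<omega> \<in> B \<Longrightarrow> X \<omega> = X' \<omega>) \<Longrightarrow> cexp M X B = cexp M X' B"
  unfolding cexp_def by (metis indicator_simps(2) scale_zero_left)

lemma cexp_diff:
  assumes "integrable M X" "integrable M X'" "B \<in> sets M"
  shows "cexp M (\<lambda>\<omega>. X \<omega> - X' \<omega>) B = cexp M X B - cexp M X' B"
  using assms by (simp add: cexp_def scaleR_diff_right integrable_mult_indicator)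

lemma cexp_const:
  assumes "finite_measure M" "B \<in> sets M" "measure M B > 0"
  shows "cexp M (\<lambda>_. c) B = c"
proof -
  have "integrable M (indicator B :: 'a \<Rightarrow> real)"
    using assms by (simp add: finite_measure.emeasure_finite less_top[symmetric])
  with assms sets.sets_into_space[OF assms(2)] show ?thesis
    by (simp add: cexp_def Int_absorb2)
qed

(* Needs no positivity of measure M B: on a null set both sides vanish. *)
lemma measure_scaleR_cexp:
  assumes "finite_measure M" "B \<in> sets M"
  shows "measure M B *\<^sub>R cexp M X B = (\<integral>\<omega>. indicator B \<omega> *\<^sub>R X \<omega> \<partial>M)"
proof (cases "measure M B = 0")
  case True
  then have "B \<in> null_sets M"
    using assms by (simp add: null_setsI finite_measure.emeasure_eq_measure)
  then have "AE \<omega> in M. indicator B \<omega> *\<^sub>R X \<omega> = 0"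
    by (auto elim!: AE_mp[OF AE_not_in])
  with True show ?thesis by (simp add: integral_eq_zero_AE)
qed (simp add: cexp_def)

lemma cexp_ind_vec_nth:
  assumes "finite_measure M" "Y \<in> M \<rightarrow>\<^sub>M count_space UNIV" "B \<in> sets M"
  shows "cexp M (\<lambda>\<omega>. ind_vec (Y \<omega>)) B $ k = cprob M {\<omega> \<in> space M. Y \<omega> = k} B"
proof -
  have "(\<integral>\<omega>. indicator B \<omega> *\<^sub>R ind_vec (Y \<omega>) \<partial>M) $ k
      = (\<integral>\<omega>. (indicator B \<omega> *\<^sub>R ind_vec (Y \<omega>)) $ k \<partial>M)"
    using integrable_mult_indicator[OF assms(3) integrable_ind_vec[OF assms(1,2)]]
    by (rule integral_bounded_linear[OF bounded_linear_vec_nth, symmetric])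
  also have "\<dots> = (\<integral>\<omega>. indicator ({\<omega> \<in> space M. Y \<omega> = k} \<inter> B) \<omega> \<partial>M)"
    using sets.sets_into_space[OF assms(3)]
    by (intro Bochner_Integration.integral_cong) (auto simp: ind_vec_def indicator_def)
  also have "\<dots> = measure M ({\<omega> \<in> space M. Y \<omega> = k} \<inter> B)"
    by (auto intro: arg_cong[where f="measure M"])
  finally show ?thesis
    by (simp add: cexp_def cprob_def)
qed

lemma cexp_total:
  assumes "finite_measure M" "integrable M X" "finite I" "disjoint_family_on P I"
    "\<And>i. i \<in> I \<Longrightarrow> P i \<in> sets M" "space M \<subseteq> (\<Union>i\<in>I. P i)" "S \<in> sets M"
  shows "cexp M X S = (\<Sum>i\<in>I. cprob M (P i) S *\<^sub>R cexp M X (P i \<inter> S))"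
proof -
  have "cprob M (P i) S *\<^sub>R cexp M X (P i \<inter> S)
      = (1 / measure M S) *\<^sub>R (\<integral>\<omega>. indicator (P i \<inter> S) \<omega> *\<^sub>R X \<omega> \<partial>M)" if "i \<in> I" for i
    using assms(5)[OF that] assms(7)
    by (simp add: cprob_def flip: measure_scaleR_cexp[OF assms(1)])
  then have "(\<Sum>i\<in>I. cprob M (P i) S *\<^sub>R cexp M X (P i \<inter> S))
      = (1 / measure M S) *\<^sub>R (\<Sum>i\<in>I. \<integral>\<omega>. indicator (P i \<inter> S) \<omega> *\<^sub>R X \<omega> \<partial>M)"
    by (simp add: scaleR_sum_right)
  also have "(\<Sum>i\<in>I. \<integral>\<omega>. indicator (P i \<inter> S) \<omega> *\<^sub>R X \<omega> \<partial>M)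
      = (\<integral>\<omega>. (\<Sum>i\<in>I. indicator (P i \<inter> S) \<omega>) *\<^sub>R X \<omega> \<partial>M)"
    unfolding scaleR_sum_left using assms
    by (subst Bochner_Integration.integral_sum) (auto intro!: integrable_mult_indicator)
  also have "(\<lambda>\<omega>. \<Sum>i\<in>I. indicator (P i \<inter> S) \<omega>) = (indicator S :: 'a \<Rightarrow> real)"
  proof
    fix \<omega>
    have "disjoint_family_on (\<lambda>i. P i \<inter> S) I"
      using assms(4) by (auto simp: disjoint_family_on_def)
    then have "(\<Sum>i\<in>I. indicator (P i \<inter> S) \<omega>) = (indicator (\<Union>i\<in>I. P i \<inter> S) \<omega> :: real)"
      by (rule indicator_UN_disjoint[OF assms(3), symmetric])
    also have "(\<Union>i\<in>I. P i \<inter> S) = S"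
      using assms(6) sets.sets_into_space[OF assms(7)] by blast
    finally show "(\<Sum>i\<in>I. indicator (P i \<inter> S) \<omega>) = (indicator S \<omega> :: real)" .
  qed
  finally show ?thesis
    by (simp add: cexp_def)
qed

lemma finite_histories: "finite (histories T0 :: (nat \<Rightarrow> 'k::finite) set)"
  unfolding histories_def by (rule finite_PiE) auto

lemma sets_hist_event:
  "(\<And>s. Y s \<in> M \<rightarrow>\<^sub>M count_space UNIV) \<Longrightarrow> hist_event M Y T0 h \<in> sets M"
  unfolding hist_event_def by measurable

lemma disjoint_family_on_hist_event:
  fixes Y :: "nat \<Rightarrow> 'a \<Rightarrow> 'k"
  shows "disjoint_family_on (hist_event M Y T0) (histories T0)"
  unfolding disjoint_family_on_def
proof (intro ballI impI)
  fix h h' :: "nat \<Rightarrow> 'k" assume "h \<in> histories T0" "h' \<in> histories T0" "h \<noteq> h'"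
  then obtain s where "s \<in> {1..T0}" "h s \<noteq> h' s"
    unfolding histories_def using PiE_ext by blast
  then show "hist_event M Y T0 h \<inter> hist_event M Y T0 h' = {}"
    unfolding hist_event_def by auto
qed

lemma space_subset_UN_hist_event: "space M \<subseteq> (\<Union>h\<in>histories T0. hist_event M Y T0 h)"
proof
  fix \<omega> assume "\<omega> \<in> space M"
  then have "\<omega> \<in> hist_event M Y T0 (restrict (\<lambda>s. Y s \<omega>) {1..T0})"
    by (simp add: hist_event_def)
  moreover have "restrict (\<lambda>s. Y s \<omega>) {1..T0} \<in> histories T0"
    by (simp add: histories_def)
  ultimately show "\<omega> \<in> (\<Union>h\<in>histories T0. hist_event M Y T0 h)" by blast
qed

lemma cexp_total_hist_event:
  fixes Y :: "nat \<Rightarrow> 'a \<Rightarrow> 'k::finite"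
  assumes "finite_measure M" "\<And>s. Y s \<in> M \<rightarrow>\<^sub>M count_space UNIV" "integrable M X" "S \<in> sets M"
  shows "cexp M X S
       = (\<Sum>h\<in>histories T0. cprob M (hist_event M Y T0 h) S *\<^sub>R cexp M X (hist_event M Y T0 h \<inter> S))"
  using assms
  by (intro cexp_total finite_histories disjoint_family_on_hist_event space_subset_UN_hist_event
      sets_hist_event)

lemma measure_Int_compl_pos:
  assumes "finite_measure M" "H \<in> sets M" "G \<in> sets M"
    "0 < measure M (H \<inter> G)" "cprob M G H < 1"
  shows "0 < measure M (H \<inter> (space M - G))"
proof -
  have "measure M (H \<inter> G) \<le> measure M H"
    using assms by (intro finite_measure.finite_measure_mono) auto
  with assms(4,5) have "measure M (H \<inter> G) < measure M H"
    by (simp add: cprob_def Int_commute)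
  moreover have "H \<inter> (space M - G) = H - G"
    using sets.sets_into_space[OF assms(2)] by blast
  ultimately show ?thesis
    using assms by (simp add: finite_measure.finite_measure_Diff')
qed

lemma cexp_change_eq_if_cprob_eq:
  fixes M :: "'a measure" and Y :: "nat \<Rightarrow> 'a \<Rightarrow> 'k::finite" and T0 t :: nat and h :: "nat \<Rightarrow> 'k"
  defines "H \<equiv> hist_event M Y T0 h"
  assumes M: "finite_measure M" and Y: "\<And>s. Y s \<in> M \<rightarrow>\<^sub>M count_space UNIV" and "1 \<le> T0"
    and G: "G \<in> sets M" and G': "G' \<in> sets M"
    and pos: "0 < measure M (H \<inter> G)" and pos': "0 < measure M (H \<inter> G')"
    and same_law: "\<And>x. cprob M {\<omega> \<in> space M. Y t \<omega> = x} (H \<inter> G)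
                     = cprob M {\<omega> \<in> space M. Y t \<omega> = x} (H \<inter> G')"
  shows "cexp M (\<lambda>\<omega>. ind_vec (Y t \<omega>) - ind_vec (Y T0 \<omega>)) (H \<inter> G)
       = cexp M (\<lambda>\<omega>. ind_vec (Y t \<omega>) - ind_vec (Y T0 \<omega>)) (H \<inter> G')"
proof -
  have H: "H \<in> sets M"
    unfolding H_def using Y by (rule sets_hist_event)
  have change: "cexp M (\<lambda>\<omega>. ind_vec (Y t \<omega>) - ind_vec (Y T0 \<omega>)) (H \<inter> B)
      = cexp M (\<lambda>\<omega>. ind_vec (Y t \<omega>)) (H \<inter> B) - ind_vec (h T0)"
    if "B \<in> sets M" "0 < measure M (H \<inter> B)" for B
  proof -
    have "cexp M (\<lambda>\<omega>. ind_vec (Y t \<omega>) - ind_vec (Y T0 \<omega>)) (H \<inter> B)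
        = cexp M (\<lambda>\<omega>. ind_vec (Y t \<omega>) - ind_vec (h T0)) (H \<inter> B)"
      using \<open>1 \<le> T0\<close> by (intro cexp_cong) (auto simp: H_def hist_event_def)
    also have "\<dots> = cexp M (\<lambda>\<omega>. ind_vec (Y t \<omega>)) (H \<inter> B) - cexp M (\<lambda>_. ind_vec (h T0)) (H \<inter> B)"
      using H that integrable_ind_vec[OF M Y] finite_measure.integrable_const[OF M]
      by (intro cexp_diff) auto
    also have "cexp M (\<lambda>_. ind_vec (h T0)) (H \<inter> B) = ind_vec (h T0)"
      using H that by (intro cexp_const[OF M]) auto
    finally show ?thesis .
  qed
  have "cexp M (\<lambda>\<omega>. ind_vec (Y t \<omega>)) (H \<inter> G) = cexp M (\<lambda>\<omega>. ind_vec (Y t \<omega>)) (H \<inter> G')"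
    using H G G' same_law by (simp add: vec_eq_iff cexp_ind_vec_nth[OF M Y])
  with G G' pos pos' show ?thesis
    by (simp add: change)
qed

lemma cprob_scaleR_cexp_change_eq_compl:
  fixes M :: "'a measure" and Y :: "nat \<Rightarrow> 'a \<Rightarrow> 'k::finite" and T0 t :: nat and h :: "nat \<Rightarrow> 'k"
  defines "H \<equiv> hist_event M Y T0 h" and "Z \<equiv> \<lambda>\<omega>. ind_vec (Y t \<omega>) - ind_vec (Y T0 \<omega>)"
  assumes M: "finite_measure M" and Y: "\<And>s. Y s \<in> M \<rightarrow>\<^sub>M count_space UNIV" and "1 \<le> T0"
    and G: "G \<in> sets M"
    and overlap: "0 < measure M H \<Longrightarrow> cprob M G H < 1"
    and same_law: "\<And>x. 0 < measure M (H \<inter> G) \<Longrightarrow> 0 < measure M (H \<inter> (space M - G)) \<Longrightarrow>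
          cprob M {\<omega> \<in> space M. Y t \<omega> = x} (H \<inter> G)
        = cprob M {\<omega> \<in> space M. Y t \<omega> = x} (H \<inter> (space M - G))"
  shows "cprob M H G *\<^sub>R cexp M Z (H \<inter> G) = cprob M H G *\<^sub>R cexp M Z (H \<inter> (space M - G))"
proof (cases "measure M (H \<inter> G) = 0")
  case False
  have H: "H \<in> sets M"
    unfolding H_def using Y by (rule sets_hist_event)
  from False have pos: "0 < measure M (H \<inter> G)"
    by (simp add: zero_less_measure_iff)
  moreover have "measure M (H \<inter> G) \<le> measure M H"
    using H G by (intro finite_measure.finite_measure_mono[OF M]) auto
  ultimately have "0 < measure M (H \<inter> (space M - G))"
    using measure_Int_compl_pos[OF M H G] overlap by simp
  with pos have "cexp M Z (H \<inter> G) = cexp M Z (H \<inter> (space M - G))"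
    unfolding Z_def H_def using G same_law
    by (intro cexp_change_eq_if_cprob_eq[OF M Y \<open>1 \<le> T0\<close>]) (auto simp: H_def)
  then show ?thesis by simp
qed (simp add: cprob_def Int_commute)

lemma hist_event_Yobs: "hist_event M (Yobs T0 D Y0 Y1) T0 = hist_event M Y0 T0"
  by (auto simp: fun_eq_iff hist_event_def Yobs_def)

lemma sets_treated: "D \<in> M \<rightarrow>\<^sub>M count_space UNIV \<Longrightarrow> treated M D \<in> sets M"
  unfolding treated_def by measurable

lemma control_eq_Diff_treated: "control M D = space M - treated M D"
  by (auto simp: control_def treated_def)

lemma cexp_Xobs_hist_event_control:
  assumes "1 \<le> T0" "T0 < t"
  shows "cexp M (\<lambda>\<omega>. Xobs T0 D Y0 Y1 t \<omega> - ind_vec (h T0)) (hist_event M Y0 T0 h \<inter> control M D)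
       = cexp M (\<lambda>\<omega>. ind_vec (Y0 t \<omega>) - ind_vec (Y0 T0 \<omega>)) (hist_event M Y0 T0 h \<inter> control M D)"
  using assms
  by (intro cexp_cong) (auto simp: hist_event_def control_def Xobs_def Yobs_def)

lemma mu_DiD_minus_mu_ATT:
  assumes M: "finite_measure M" and D: "D \<in> M \<rightarrow>\<^sub>M count_space UNIV"
    and Y0: "\<And>s. Y0 s \<in> M \<rightarrow>\<^sub>M count_space UNIV" and Y1: "\<And>s. Y1 s \<in> M \<rightarrow>\<^sub>M count_space UNIV"
    and "T0 < t"
  shows "mu_DiD M T0 D Y0 Y1 t - mu_ATT M D Y0 Y1 t
       = cexp M (\<lambda>\<omega>. ind_vec (Y0 t \<omega>) - ind_vec (Y0 T0 \<omega>)) (treated M D)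
       - cexp M (\<lambda>\<omega>. ind_vec (Y0 t \<omega>) - ind_vec (Y0 T0 \<omega>)) (control M D)"
proof -
  have sets: "treated M D \<in> sets M" "control M D \<in> sets M"
    using sets_treated[OF D] by (auto simp: control_eq_Diff_treated)
  have "cexp M (\<lambda>\<omega>. Xobs T0 D Y0 Y1 t \<omega> - Xobs T0 D Y0 Y1 T0 \<omega>) (treated M D)
      = cexp M (\<lambda>\<omega>. ind_vec (Y1 t \<omega>) - ind_vec (Y0 T0 \<omega>)) (treated M D)"
    using \<open>T0 < t\<close> by (intro cexp_cong) (auto simp: Xobs_def Yobs_def treated_def)
  moreover have "cexp M (\<lambda>\<omega>. Xobs T0 D Y0 Y1 t \<omega> - Xobs T0 D Y0 Y1 T0 \<omega>) (control M D)
      = cexp M (\<lambda>\<omega>. ind_vec (Y0 t \<omega>) - ind_vec (Y0 T0 \<omega>)) (control M D)"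
    using \<open>T0 < t\<close> by (intro cexp_cong) (auto simp: Xobs_def Yobs_def control_def)
  ultimately show ?thesis
    using sets integrable_ind_vec[OF M Y0] integrable_ind_vec[OF M Y1]
    by (simp add: mu_DiD_def mu_ATT_def cexp_diff)
qed

theorem proposition3:
  fixes M :: "'a measure" and D :: "'a \<Rightarrow> bool"
    and Y0 Y1 :: "nat \<Rightarrow> 'a \<Rightarrow> 'k::finite"
    and T0 T1 T t :: nat
  assumes "prob_space M"
    and "T0 \<ge> 1" and "T1 \<ge> 1" and "T = T0 + T1" and "CARD('k) \<ge> 2"
    and "D \<in> M \<rightarrow>\<^sub>M count_space UNIV"
    and "\<And>s. Y0 s \<in> M \<rightarrow>\<^sub>M count_space UNIV"
    and "\<And>s. Y1 s \<in> M \<rightarrow>\<^sub>M count_space UNIV"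
    \<comment> \<open>no anticipation\<close>
    and no_anticipation: "\<And>s \<omega>. s \<in> {1..T0} \<Longrightarrow> \<omega> \<in> space M \<Longrightarrow> Y1 s \<omega> = Y0 s \<omega>"
    \<comment> \<open>common support\<close>
    and common_support: "\<exists>\<epsilon>>0. \<forall>h\<in>histories T0.
          measure M (hist_event M (Yobs T0 D Y0 Y1) T0 h) > 0 \<longrightarrow>
            \<epsilon> \<le> cprob M (treated M D) (hist_event M (Yobs T0 D Y0 Y1) T0 h) \<and>
            cprob M (treated M D) (hist_event M (Yobs T0 D Y0 Y1) T0 h) < 1 - \<epsilon>"
    \<comment> \<open>transition independence\<close>
    and transition_indep: "\<And>s x h. s \<in> {T0+1..T} \<Longrightarrow> h \<in> histories T0 \<Longrightarrow>
          measure M (hist_event M Y0 T0 h \<inter> treated M D) > 0 \<Longrightarrow>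
          measure M (hist_event M Y0 T0 h \<inter> control M D) > 0 \<Longrightarrow>
          cprob M {\<omega> \<in> space M. Y0 s \<omega> = x} (hist_event M Y0 T0 h \<inter> treated M D)
          = cprob M {\<omega> \<in> space M. Y0 s \<omega> = x} (hist_event M Y0 T0 h \<inter> control M D)"
    and "t \<in> {T0+1..T}"
  shows "mu_DiD M T0 D Y0 Y1 t - mu_ATT M D Y0 Y1 t =
    (\<Sum>h\<in>histories T0.
       (cprob M (hist_event M (Yobs T0 D Y0 Y1) T0 h) (treated M D)
        - cprob M (hist_event M (Yobs T0 D Y0 Y1) T0 h) (control M D))
       *\<^sub>R cexp M (\<lambda>\<omega>. Xobs T0 D Y0 Y1 t \<omega> - ind_vec (h T0))
              (hist_event M (Yobs T0 D Y0 Y1) T0 h \<inter> control M D))"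
proof -
  have M: "finite_measure M"
    using \<open>prob_space M\<close> by (rule prob_space.finite_measure)
  define Tr Co H where "Tr = treated M D" and "Co = control M D" and "H = hist_event M Y0 T0"
  define Z where "Z \<omega> = ind_vec (Y0 t \<omega>) - ind_vec (Y0 T0 \<omega>)" for \<omega>
  have Tr: "Tr \<in> sets M" and Co: "Co = space M - Tr" "Co \<in> sets M" and "T0 < t" "1 \<le> T0"
    using sets_treated[OF assms(6)] \<open>t \<in> {T0+1..T}\<close> \<open>T0 \<ge> 1\<close>
    by (auto simp: Tr_def Co_def control_eq_Diff_treated)
  have Z: "integrable M Z"
    unfolding Z_def using integrable_ind_vec[OF M assms(7)] by auto
  have overlap: "cprob M Tr (H h) < 1" if "h \<in> histories T0" "0 < measure M (H h)" for h
    using common_support that unfolding hist_event_Yobs H_def Tr_def by force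
  have treated_to_control: "cprob M (H h) Tr *\<^sub>R cexp M Z (H h \<inter> Tr)
      = cprob M (H h) Tr *\<^sub>R cexp M Z (H h \<inter> Co)" if "h \<in> histories T0" for h
    unfolding Z_def H_def Co(1)
    using transition_indep[OF \<open>t \<in> _\<close> that] overlap[OF that] Tr
    by (intro cprob_scaleR_cexp_change_eq_compl[OF M assms(7) \<open>1 \<le> T0\<close>])
      (auto simp: H_def Tr_def control_eq_Diff_treated)
  have "mu_DiD M T0 D Y0 Y1 t - mu_ATT M D Y0 Y1 t = cexp M Z Tr - cexp M Z Co"
    unfolding Z_def Tr_def Co_def by (rule mu_DiD_minus_mu_ATT[OF M assms(6-8) \<open>T0 < t\<close>])
  also have "\<dots> = (\<Sum>h\<in>histories T0. cprob M (H h) Tr *\<^sub>R cexp M Z (H h \<inter> Tr))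
      - (\<Sum>h\<in>histories T0. cprob M (H h) Co *\<^sub>R cexp M Z (H h \<inter> Co))"
    unfolding H_def by (simp only: cexp_total_hist_event[of M Y0 Z Tr T0, OF M assms(7) Z Tr]
        cexp_total_hist_event[of M Y0 Z Co T0, OF M assms(7) Z Co(2)])
  also have "\<dots> = (\<Sum>h\<in>histories T0. (cprob M (H h) Tr - cprob M (H h) Co) *\<^sub>R cexp M Z (H h \<inter> Co))"
    by (simp add: treated_to_control scaleR_left_diff_distrib sum_subtractf)
  also have "\<dots> = (\<Sum>h\<in>histories T0. (cprob M (H h) Tr - cprob M (H h) Co)
      *\<^sub>R cexp M (\<lambda>\<omega>. Xobs T0 D Y0 Y1 t \<omega> - ind_vec (h T0)) (H h \<inter> Co))"
    unfolding Z_def H_def Co_def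
    using \<open>1 \<le> T0\<close> \<open>T0 < t\<close> by (simp add: cexp_Xobs_hist_event_control)
  finally show ?thesis
    by (simp add: hist_event_Yobs H_def Tr_def Co_def)
qed

end
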